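(* Let $X$ be a topological vector space, $Z$ a locally convex topological vector space, $C\subseteq Z$ a nonempty closed convex cone with $C^-\neq\{0\}$, and $f:X\to\mathcal{F}(Z,C)$. If $f(x_0)$ is a convex set and $\varphi_{(f,z^* )}$ is lower semicontinuous at $x_0$ for every $z^*\in C^-\setminus\{0\}$, then $f$ is lower lattice-semicontinuous at $x_0$.
   Context: $\mathcal{F}(Z,C)=\{A\subseteq Z\colon A=\operatorname{cl}(A+C)\}$ (empty set included); $C^-=\{z^*\in Z^*\colon z^*(z)\le0\ \forall z\in C\}$. $\varphi_{(f,z^* )}(x)=\inf_{z\in f(x)}(-z^*(z))$, with $\inf\emptyset=+\infty$. $f$ is lower lattice-semicontinuous at $x_0$ iff $f(x_0)\supseteq\bigcap_{U\in\mathcal{N}(x_0)}\operatorname{cl}\bigcup_{x\in U}f(x)$ ($\mathcal{N}(x_0)$ the neighborhoods of $x_0$); equivalently, for every $z_0\notin f(x_0)$ there exist a neighborhood $U$ of $x_0$ and a neighborhood $V$ of $z_0$ with $z\notin f(x)$ for all $x\in U$, $z\in V$. *)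

theory Defs
  imports "HOL-Analysis.Analysis"
begin

definition topological_vector_space :: "'a::{real_vector,topological_space} itself \<Rightarrow> bool" where
  "topological_vector_space (TYPE('a)) \<longleftrightarrow>
     continuous_on UNIV (\<lambda>p::'a \<times> 'a. fst p + snd p) \<and>
     continuous_on UNIV (\<lambda>p::real \<times> 'a. fst p *\<^sub>R snd p)"

definition locally_convex_space :: "'a::{real_vector,topological_space} itself \<Rightarrow> bool" where
  "locally_convex_space (TYPE('a)) \<longleftrightarrow>
     topological_vector_space (TYPE('a)) \<and>
     (\<forall>U::'a set. open U \<and> 0 \<in> U \<longrightarrow> (\<exists>V. open V \<and> convex V \<and> 0 \<in> V \<and> V \<subseteq> U))"

definition topological_dual :: "('a::{real_vector,topological_space} \<Rightarrow> real) set" where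
  "topological_dual = {g. linear g \<and> continuous_on UNIV g}"

definition neg_dual_cone :: "'a::{real_vector,topological_space} set \<Rightarrow> ('a \<Rightarrow> real) set" where
  "neg_dual_cone C = {g \<in> topological_dual. \<forall>z\<in>C. g z \<le> 0}"

text \<open>F(Z,C) = { A \<subseteq> Z : A = cl(A + C) } (empty set included).\<close>
definition upper_closed_sets :: "'a::{real_vector,topological_space} set \<Rightarrow> 'a set set" where
  "upper_closed_sets C = {A. A = closure {a + c | a c. a \<in> A \<and> c \<in> C}}"

text \<open>Scalarization \<phi>_(f,z*)(x) = inf_{z \<in> f x} (- z*(z)), with inf \<emptyset> = +\<infinity>.\<close>
definition scalarization :: "('x \<Rightarrow> 'z set) \<Rightarrow> ('z \<Rightarrow> real) \<Rightarrow> 'x \<Rightarrow> ereal" where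
  "scalarization f g x = (INF z\<in>f x. ereal (- g z))"

definition lsc_at_point :: "('x::topological_space \<Rightarrow> ereal) \<Rightarrow> 'x \<Rightarrow> bool" where
  "lsc_at_point \<phi> x0 \<longleftrightarrow> (\<forall>t. t < \<phi> x0 \<longrightarrow> eventually (\<lambda>x. t < \<phi> x) (nhds x0))"

definition neighbourhoods :: "'x::topological_space \<Rightarrow> 'x set set" where
  "neighbourhoods x0 = {U. \<exists>V. open V \<and> x0 \<in> V \<and> V \<subseteq> U}"

definition lower_lattice_semicontinuous_at :: "('x::topological_space \<Rightarrow> 'z::topological_space set) \<Rightarrow> 'x \<Rightarrow> bool" where
  "lower_lattice_semicontinuous_at f x0 \<longleftrightarrow>
     (\<Inter>U\<in>neighbourhoods x0. closure (\<Union>x\<in>U. f x)) \<subseteq> f x0"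

end

theory Submission
  imports Defs
begin

text \<open>If \<open>z0 \<notin> f x0\<close>, the closed convex set \<open>f x0\<close> is strictly separated from \<open>z0\<close> by a
  continuous linear functional \<open>z*\<close>, say \<open>z*(k) + d \<le> z*(z0)\<close> on \<open>f x0\<close> with \<open>d > 0\<close>; in a
  general locally convex space this comes from the Minkowski functional of a convex open
  neighbourhood and the Hahn--Banach theorem (via Zorn's lemma). Since \<open>f x0 + C \<subseteq> f x0\<close>,
  \<open>z*\<close> is nonpositive on the cone \<open>C\<close>, and \<open>\<phi>(x0) \<ge> d - z*(z0)\<close>. Lower semicontinuity of
  \<open>\<phi>\<close> keeps \<open>\<phi> > d/2 - z*(z0)\<close> near \<open>x0\<close>, so the open half-space \<open>{z*> z*(z0) - d/2}\<close>
  around \<open>z0\<close> misses every \<open>f x\<close> for \<open>x\<close> near \<open>x0\<close>. If \<open>f x0 = {}\<close>, any nonzero element of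
  \<open>C\<^sup>-\<close> works since then \<open>\<phi>(x0) = \<infinity>\<close>.\<close>

section \<open>Topological vector spaces\<close>

lemma tvs_continuous_on_scaleR_left:
  assumes "topological_vector_space TYPE('a::{real_vector,topological_space})"
  shows "continuous_on UNIV (\<lambda>y::'a. c *\<^sub>R y)"
proof -
  have "continuous_on UNIV (\<lambda>p::real \<times> 'a. fst p *\<^sub>R snd p)"
    using assms unfolding topological_vector_space_def by blast
  from continuous_on_compose2[OF this, of UNIV "Pair c"] show ?thesis
    by (simp add: continuous_intros)
qed

lemma tvs_continuous_on_scaleR_right:
  assumes "topological_vector_space TYPE('a::{real_vector,topological_space})"
  shows "continuous_on UNIV (\<lambda>t::real. t *\<^sub>R (x::'a))"
proof -
  have "continuous_on UNIV (\<lambda>p::real \<times> 'a. fst p *\<^sub>R snd p)"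
    using assms unfolding topological_vector_space_def by blast
  from continuous_on_compose2[OF this, of UNIV "\<lambda>t. (t, x)"] show ?thesis
    by (simp add: continuous_intros)
qed

lemma tvs_continuous_on_translation:
  assumes "topological_vector_space TYPE('a::{real_vector,topological_space})"
  shows "continuous_on UNIV (\<lambda>y::'a. y + a)"
proof -
  have "continuous_on UNIV (\<lambda>p::'a \<times> 'a. fst p + snd p)"
    using assms unfolding topological_vector_space_def by blast
  from continuous_on_compose2[OF this, of UNIV "\<lambda>y. (y, a)"] show ?thesis
    by (simp add: continuous_intros)
qed

lemma tvs_open_affine_preimage:
  assumes "topological_vector_space TYPE('a::{real_vector,topological_space})" and "open (U::'a set)"
  shows "open {y. c *\<^sub>R (y + a) \<in> U}"
proof -
  have "continuous_on UNIV (\<lambda>y::'a. c *\<^sub>R (y + a))"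
    using continuous_on_compose2[OF tvs_continuous_on_scaleR_left tvs_continuous_on_translation]
      assms(1) by blast
  from open_vimage[OF assms(2) this] show ?thesis
    by (simp add: vimage_def)
qed

lemma tvs_open_translation_preimage:
  assumes "topological_vector_space TYPE('a::{real_vector,topological_space})" and "open (U::'a set)"
  shows "open {y. y + a \<in> U}"
  using tvs_open_affine_preimage[OF assms, of 1 a] by simp

lemma tvs_open_ray:
  assumes "topological_vector_space TYPE('a::{real_vector,topological_space})"
    and "open (U::'a set)" and "t0 *\<^sub>R x \<in> U"
  shows "\<exists>e>0. \<forall>t. \<bar>t - t0\<bar> < e \<longrightarrow> t *\<^sub>R x \<in> U"
proof -
  have "open {t. t *\<^sub>R x \<in> U}"
    using open_vimage[OF assms(2) tvs_continuous_on_scaleR_right[OF assms(1)]] by (simp add: vimage_def)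
  with assms(3) obtain e where "e > 0" "\<forall>t. dist t t0 < e \<longrightarrow> t *\<^sub>R x \<in> U"
    unfolding open_dist by blast
  then show ?thesis
    by (auto simp: dist_real_def)
qed

lemma tvs_linear_continuous_if_bounded_above:
  assumes tvs: "topological_vector_space TYPE('a::{real_vector,topological_space})"
    and lin: "linear (g::'a \<Rightarrow> real)" and U: "open U" "0 \<in> U" and bound: "\<forall>u\<in>U. g u < 1"
  shows "continuous_on UNIV g"
  unfolding continuous_on_topological
proof (intro ballI allI impI)
  fix z B assume "open B" "g z \<in> B"
  then obtain e where e: "e > 0" "\<forall>r. dist r (g z) < e \<longrightarrow> r \<in> B"
    unfolding open_dist by blast
  \<comment> \<open>\<open>N = U \<inter> -U\<close> is a symmetric neighbourhood of 0 on which \<open>\<bar>g\<bar> < 1\<close>\<close>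
  define N where "N = {u. u \<in> U \<and> (-1) *\<^sub>R (u + 0) \<in> U}"
  have "open N"
    using open_Int[OF U(1) tvs_open_affine_preimage[OF tvs U(1), of "-1" 0]]
    by (simp add: N_def Collect_conj_eq)
  have N_bound: "\<bar>g u\<bar> < 1" if "u \<in> N" for u
    using that bound linear_neg[OF lin, of u] by (force simp: N_def abs_less_iff)
  define A where "A = {y. (1/e) *\<^sub>R (y + (-z)) \<in> N}"
  have "open A"
    unfolding A_def by (rule tvs_open_affine_preimage[OF tvs \<open>open N\<close>])
  moreover have "z \<in> A"
    using U(2) by (simp add: A_def N_def)
  moreover have "g y \<in> B" if "y \<in> A" for y
  proof -
    have "g ((1/e) *\<^sub>R (y + (-z))) = (g y - g z) / e"
      using lin by (simp add: linear_scale linear_diff diff_divide_distrib)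
    with N_bound[of "(1/e) *\<^sub>R (y + (-z))"] that e(1) have "\<bar>g y - g z\<bar> < e"
      by (simp add: A_def divide_less_eq abs_divide)
    then show ?thesis
      using e(2) by (simp add: dist_real_def)
  qed
  ultimately show "\<exists>A. open A \<and> z \<in> A \<and> (\<forall>y\<in>UNIV. y \<in> A \<longrightarrow> g y \<in> B)"
    by blast
qed

section \<open>The Minkowski functional\<close>

definition sublinear :: "('a::real_vector \<Rightarrow> real) \<Rightarrow> bool" where
  "sublinear p \<longleftrightarrow> (\<forall>x y. p (x + y) \<le> p x + p y) \<and> (\<forall>c x. 0 < c \<longrightarrow> p (c *\<^sub>R x) = c * p x)"

definition minkowski_functional :: "'a::real_vector set \<Rightarrow> 'a \<Rightarrow> real" where
  "minkowski_functional U x = Inf {t. 0 < t \<and> (1/t) *\<^sub>R x \<in> U}"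

lemma minkowski_functional_le:
  assumes "0 < t" and "(1/t) *\<^sub>R x \<in> U"
  shows "minkowski_functional U x \<le> t"
  unfolding minkowski_functional_def
  by (rule cInf_lower) (use assms in \<open>auto intro: bdd_belowI[of _ 0]\<close>)

context
  fixes U :: "'a::{real_vector,topological_space} set"
  assumes tvs: "topological_vector_space TYPE('a)" and U: "open U" "convex U" "0 \<in> U"
begin

lemma minkowski_levels_nonempty: "{t. 0 < t \<and> (1/t) *\<^sub>R x \<in> U} \<noteq> {}"
proof -
  obtain e where "e > 0" "\<forall>t. \<bar>t - 0\<bar> < e \<longrightarrow> t *\<^sub>R x \<in> U"
    using tvs_open_ray[OF tvs U(1), of 0 x] U(3) by auto
  then have "2/e \<in> {t. 0 < t \<and> (1/t) *\<^sub>R x \<in> U}"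
    by simp
  then show ?thesis
    by blast
qed

lemma minkowski_functional_nonneg: "0 \<le> minkowski_functional U x"
  unfolding minkowski_functional_def by (rule cInf_greatest[OF minkowski_levels_nonempty]) auto

lemma minkowski_functional_less_imp_mem:
  assumes "minkowski_functional U x < t"
  shows "(1/t) *\<^sub>R x \<in> U"
proof -
  obtain s where s: "0 < s" "(1/s) *\<^sub>R x \<in> U" "s < t"
    using cInf_lessD[OF minkowski_levels_nonempty assms[unfolded minkowski_functional_def]] by blast
  have "(s/t) *\<^sub>R ((1/s) *\<^sub>R x) + (1 - s/t) *\<^sub>R 0 \<in> U"
    using convexD[OF U(2) s(2) U(3), of "s/t" "1 - s/t"] s by simp
  then show ?thesis
    using s by simp
qed

lemma sublinear_minkowski_functional: "sublinear (minkowski_functional U)"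
proof -
  let ?p = "minkowski_functional U"
  have subadditive: "?p (x + y) \<le> ?p x + ?p y" for x y
  proof (rule field_le_epsilon)
    fix d :: real assume "d > 0"
    define s where "s = ?p x + d/2"
    define t where "t = ?p y + d/2"
    have st: "0 < s" "0 < t" "(1/s) *\<^sub>R x \<in> U" "(1/t) *\<^sub>R y \<in> U"
      using \<open>d > 0\<close> minkowski_functional_nonneg[of x] minkowski_functional_nonneg[of y]
        minkowski_functional_less_imp_mem[of x s] minkowski_functional_less_imp_mem[of y t]
      by (auto simp: s_def t_def)
    have "(s/(s+t)) *\<^sub>R ((1/s) *\<^sub>R x) + (t/(s+t)) *\<^sub>R ((1/t) *\<^sub>R y) \<in> U"
      using convexD[OF U(2) st(3,4), of "s/(s+t)" "t/(s+t)"] st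
      by (simp add: add_divide_distrib[symmetric])
    then have "(1/(s+t)) *\<^sub>R (x + y) \<in> U"
      using st by (simp add: scaleR_add_right)
    then have "?p (x + y) \<le> s + t"
      using st by (intro minkowski_functional_le) auto
    then show "?p (x + y) \<le> ?p x + ?p y + d"
      by (simp add: s_def t_def)
  qed
  have homogeneous_le: "?p (c *\<^sub>R x) \<le> c * ?p x" if "0 < c" for c x
  proof (rule field_le_epsilon)
    fix d :: real assume "d > 0"
    define t where "t = ?p x + d/c"
    have t: "0 < t" "(1/t) *\<^sub>R x \<in> U"
      using divide_pos_pos[OF \<open>d > 0\<close> \<open>0 < c\<close>] minkowski_functional_nonneg[of x]
        minkowski_functional_less_imp_mem[of x t]
      by (auto simp: t_def)
    then have "?p (c *\<^sub>R x) \<le> c * t"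
      using \<open>0 < c\<close> by (intro minkowski_functional_le) auto
    then show "?p (c *\<^sub>R x) \<le> c * ?p x + d"
      using \<open>0 < c\<close> by (simp add: t_def algebra_simps)
  qed
  have "?p (c *\<^sub>R x) = c * ?p x" if "0 < c" for c x
  proof -
    have "?p x \<le> (1/c) * ?p (c *\<^sub>R x)"
      using homogeneous_le[of "1/c" "c *\<^sub>R x"] that by simp
    then show ?thesis
      using homogeneous_le[OF that, of x] that by (simp add: field_simps)
  qed
  with subadditive show ?thesis
    unfolding sublinear_def by blast
qed

lemma minkowski_functional_less_one_iff: "minkowski_functional U x < 1 \<longleftrightarrow> x \<in> U"
proof
  show "x \<in> U" if "minkowski_functional U x < 1"
    using minkowski_functional_less_imp_mem[OF that] by simp
next
  assume "x \<in> U"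
  then obtain e where e: "e > 0" "\<forall>t. \<bar>t - 1\<bar> < e \<longrightarrow> t *\<^sub>R x \<in> U"
    using tvs_open_ray[OF tvs U(1), of 1 x] by auto
  define t where "t = 1 + e/2"
  have "t *\<^sub>R x \<in> U" "1 < t"
    using e by (auto simp: t_def)
  then have "minkowski_functional U x \<le> 1/t"
    by (intro minkowski_functional_le) auto
  also have "1/t < 1"
    using \<open>1 < t\<close> by simp
  finally show "minkowski_functional U x < 1" .
qed

end

section \<open>The Hahn--Banach extension theorem\<close>

text \<open>Partial linear functionals are handled through their graphs, so that Zorn's lemma
  can be applied to set inclusion.\<close>

definition linear_graph :: "('a::real_vector \<times> real) set \<Rightarrow> bool" where
  "linear_graph G \<longleftrightarrow>
     (\<forall>x a y b. (x, a) \<in> G \<longrightarrow> (y, b) \<in> G \<longrightarrow> (x + y, a + b) \<in> G) \<and>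
     (\<forall>x a c. (x, a) \<in> G \<longrightarrow> (c *\<^sub>R x, c * a) \<in> G) \<and>
     (\<forall>x a b. (x, a) \<in> G \<longrightarrow> (x, b) \<in> G \<longrightarrow> a = b)"

definition dominated_linear_graphs ::
    "('a::real_vector \<Rightarrow> real) \<Rightarrow> ('a \<times> real) set \<Rightarrow> ('a \<times> real) set set" where
  "dominated_linear_graphs p G0 =
     {G. G0 \<subseteq> G \<and> linear_graph G \<and> (\<forall>x a. (x, a) \<in> G \<longrightarrow> a \<le> p x)}"

definition graph_extension :: "('a::real_vector \<times> real) set \<Rightarrow> 'a \<Rightarrow> real \<Rightarrow> ('a \<times> real) set" where
  "graph_extension G x1 c = {(y + t *\<^sub>R x1, a + t * c) | y a t. (y, a) \<in> G}"

lemma linear_graphD: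
  assumes "linear_graph G"
  shows "(x, a) \<in> G \<Longrightarrow> (y, b) \<in> G \<Longrightarrow> (x + y, a + b) \<in> G"
    and "(x, a) \<in> G \<Longrightarrow> (c *\<^sub>R x, c * a) \<in> G"
    and "(x, a) \<in> G \<Longrightarrow> (x, b) \<in> G \<Longrightarrow> a = b"
  using assms unfolding linear_graph_def by blast+

lemma graph_extensionI: "(y, a) \<in> G \<Longrightarrow> (y + t *\<^sub>R x1, a + t * c) \<in> graph_extension G x1 c"
  unfolding graph_extension_def by blast

lemma graph_extensionE:
  assumes "(x, a) \<in> graph_extension G x1 c"
  obtains y b t where "(y, b) \<in> G" "x = y + t *\<^sub>R x1" "a = b + t * c"
  using assms unfolding graph_extension_def by blast

lemma graph_extension_single_valued:
  assumes G: "linear_graph G" and x1: "\<forall>a. (x1, a) \<notin> G"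
    and "(x, a) \<in> graph_extension G x1 c" "(x, b) \<in> graph_extension G x1 c"
  shows "a = b"
proof -
  obtain x' a' t y' b' s where h: "(x', a') \<in> G" "x = x' + t *\<^sub>R x1" "a = a' + t * c"
    "(y', b') \<in> G" "x = y' + s *\<^sub>R x1" "b = b' + s * c"
    using assms(3,4) by (metis graph_extensionE)
  show "a = b"
  proof (cases "t = s")
    case True
    then show ?thesis
      using h linear_graphD(3)[OF G] by auto
  next
    case False
    \<comment> \<open>otherwise \<open>x1\<close> would be a multiple of \<open>y' - x'\<close>, hence in the domain of \<open>G\<close>\<close>
    have "(t - s) *\<^sub>R x1 = y' + (-1) *\<^sub>R x'"
      using h by (simp add: algebra_simps)
    moreover have "x1 = inverse (t - s) *\<^sub>R ((t - s) *\<^sub>R x1)"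
      using False by simp
    moreover have "(inverse (t - s) *\<^sub>R (y' + (-1) *\<^sub>R x'), inverse (t - s) * (b' + (-1) * a')) \<in> G"
      using h linear_graphD(1,2)[OF G] by blast
    ultimately show ?thesis
      using x1 by metis
  qed
qed

lemma linear_graph_graph_extension:
  assumes G: "linear_graph G" and x1: "\<forall>a. (x1, a) \<notin> G"
  shows "linear_graph (graph_extension G x1 c)"
  unfolding linear_graph_def
proof (intro conjI allI impI)
  fix x a y b
  assume "(x, a) \<in> graph_extension G x1 c" "(y, b) \<in> graph_extension G x1 c"
  then obtain x' a' t y' b' s where "(x', a') \<in> G" "x = x' + t *\<^sub>R x1" "a = a' + t * c"
    "(y', b') \<in> G" "y = y' + s *\<^sub>R x1" "b = b' + s * c"
    by (metis graph_extensionE)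
  then show "(x + y, a + b) \<in> graph_extension G x1 c"
    using graph_extensionI[OF linear_graphD(1)[OF G], of x' a' y' b' "t + s"]
    by (simp add: algebra_simps)
next
  fix x a r
  assume "(x, a) \<in> graph_extension G x1 c"
  then obtain x' a' t where "(x', a') \<in> G" "x = x' + t *\<^sub>R x1" "a = a' + t * c"
    by (rule graph_extensionE)
  then show "(r *\<^sub>R x, r * a) \<in> graph_extension G x1 c"
    using graph_extensionI[OF linear_graphD(2)[OF G], of x' a' r "r * t"]
    by (simp add: algebra_simps)
qed (use graph_extension_single_valued[OF G x1] in blast)

lemma sublinearD:
  assumes "sublinear p"
  shows "p (x + y) \<le> p x + p y" and "0 < c \<Longrightarrow> p (c *\<^sub>R x) = c * p x"
  using assms unfolding sublinear_def by blast+

lemma dominated_extension_value_exists: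
  assumes p: "sublinear p" and M: "linear_graph M" "(0, 0) \<in> M"
    and dom: "\<forall>x a. (x, a) \<in> M \<longrightarrow> a \<le> p x"
  shows "\<exists>c. (\<forall>y a. (y, a) \<in> M \<longrightarrow> a - p (y - x1) \<le> c) \<and> (\<forall>w b. (w, b) \<in> M \<longrightarrow> c \<le> p (w + x1) - b)"
proof -
  define S where "S = {a - p (y - x1) | y a. (y, a) \<in> M}"
  have key: "a - p (y - x1) \<le> p (w + x1) - b" if "(y, a) \<in> M" "(w, b) \<in> M" for y a w b
  proof -
    have "a + b \<le> p (y + w)"
      using dom linear_graphD(1)[OF M(1) that] by blast
    also have "\<dots> \<le> p (y - x1) + p (w + x1)"
      using sublinearD(1)[OF p, of "y - x1" "w + x1"] by simp
    finally show ?thesis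
      by simp
  qed
  have "S \<noteq> {}" and "bdd_above S"
    using M(2) key[OF _ M(2)] unfolding S_def bdd_above_def by fastforce+
  have "a - p (y - x1) \<le> Sup S" if "(y, a) \<in> M" for y a
    using cSup_upper[OF _ \<open>bdd_above S\<close>] that unfolding S_def by blast
  moreover have "Sup S \<le> p (w + x1) - b" if "(w, b) \<in> M" for w b
    by (rule cSup_least[OF \<open>S \<noteq> {}\<close>]) (use key[OF _ that] in \<open>auto simp: S_def\<close>)
  ultimately show ?thesis
    by blast
qed

lemma graph_extension_dominated:
  assumes p: "sublinear p" and M: "linear_graph M"
    and dom: "\<forall>x a. (x, a) \<in> M \<longrightarrow> a \<le> p x"
    and below: "\<forall>y a. (y, a) \<in> M \<longrightarrow> a - p (y - x1) \<le> c"
    and above: "\<forall>w b. (w, b) \<in> M \<longrightarrow> c \<le> p (w + x1) - b"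
    and "(y, a) \<in> M"
  shows "a + t * c \<le> p (y + t *\<^sub>R x1)"
proof -
  \<comment> \<open>after rescaling by \<open>\<bar>t\<bar>\<close>, the two bounds on \<open>c\<close> are exactly the cases \<open>t > 0\<close> and \<open>t < 0\<close>\<close>
  have scaled: "(inverse s *\<^sub>R y, inverse s * a) \<in> M" for s
    using linear_graphD(2)[OF M \<open>(y, a) \<in> M\<close>] .
  consider "t = 0" | "t > 0" | "t < 0"
    by linarith
  then show ?thesis
  proof cases
    case 1
    then show ?thesis
      using dom \<open>(y, a) \<in> M\<close> by simp
  next
    case 2
    have "inverse t * a + c \<le> p (inverse t *\<^sub>R y + x1)"
      using above scaled[of t] by fastforce
    then have "t * (inverse t * a + c) \<le> t * p (inverse t *\<^sub>R y + x1)"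
      using 2 by (intro mult_left_mono) auto
    also have "\<dots> = p (t *\<^sub>R (inverse t *\<^sub>R y + x1))"
      using sublinearD(2)[OF p 2] by simp
    finally show ?thesis
      using 2 by (simp add: algebra_simps)
  next
    case 3
    have "inverse (- t) * a - c \<le> p (inverse (- t) *\<^sub>R y - x1)"
      using below scaled[of "- t"] by fastforce
    then have "(- t) * (inverse (- t) * a - c) \<le> (- t) * p (inverse (- t) *\<^sub>R y - x1)"
      using 3 by (intro mult_left_mono) auto
    also have "\<dots> = p ((- t) *\<^sub>R (inverse (- t) *\<^sub>R y - x1))"
      using sublinearD(2)[OF p, of "- t"] 3 by simp
    finally show ?thesis
      using 3 by (simp add: algebra_simps)
  qed
qed

lemma dominated_linear_graph_extend:
  assumes p: "sublinear p" and M: "M \<in> dominated_linear_graphs p G0" "(0, 0) \<in> M"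
    and x1: "\<forall>a. (x1, a) \<notin> M"
  shows "\<exists>M' \<in> dominated_linear_graphs p G0. M \<subset> M'"
proof -
  have lin: "linear_graph M" and dom: "\<forall>x a. (x, a) \<in> M \<longrightarrow> a \<le> p x" and "G0 \<subseteq> M"
    using M(1) unfolding dominated_linear_graphs_def by blast+
  obtain c where c: "\<forall>y a. (y, a) \<in> M \<longrightarrow> a - p (y - x1) \<le> c"
    "\<forall>w b. (w, b) \<in> M \<longrightarrow> c \<le> p (w + x1) - b"
    using dominated_extension_value_exists[OF p lin M(2) dom] by blast
  let ?M' = "graph_extension M x1 c"
  have "M \<subseteq> ?M'"
    using graph_extensionI[of _ _ M 0] by fastforce
  moreover have "(x1, c) \<in> ?M'"
    using graph_extensionI[OF M(2), of 1] by simp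
  moreover have "\<forall>x a. (x, a) \<in> ?M' \<longrightarrow> a \<le> p x"
    using graph_extension_dominated[OF p lin dom c] by (metis graph_extensionE)
  moreover have "(x1, c) \<notin> M"
    using x1 by blast
  ultimately have "M \<subset> ?M'" and "?M' \<in> dominated_linear_graphs p G0"
    using \<open>G0 \<subseteq> M\<close> linear_graph_graph_extension[OF lin x1]
    unfolding dominated_linear_graphs_def by blast+
  then show ?thesis
    by blast
qed

lemma Union_chain_dominated_linear_graphs:
  assumes "CC \<noteq> {}" and chain: "subset.chain (dominated_linear_graphs p G0) CC"
  shows "\<Union>CC \<in> dominated_linear_graphs p G0"
proof -
  have CC: "CC \<subseteq> dominated_linear_graphs p G0"
    using chain unfolding subset.chain_def by blast
  have common: "\<exists>X\<in>CC. P \<in> X \<and> Q \<in> X" if "P \<in> \<Union>CC" "Q \<in> \<Union>CC" for P Q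
    using that chain unfolding subset.chain_def by blast
  have lin: "linear_graph (\<Union>CC)"
    unfolding linear_graph_def
  proof (intro conjI allI impI)
    fix x a y b assume "(x, a) \<in> \<Union>CC" "(y, b) \<in> \<Union>CC"
    then obtain X where "X \<in> CC" "(x, a) \<in> X" "(y, b) \<in> X"
      using common by blast
    then show "(x + y, a + b) \<in> \<Union>CC"
      using CC linear_graphD(1) unfolding dominated_linear_graphs_def by blast
  next
    fix x a c assume "(x, a) \<in> \<Union>CC"
    then show "(c *\<^sub>R x, c * a) \<in> \<Union>CC"
      using CC linear_graphD(2) unfolding dominated_linear_graphs_def by blast
  next
    fix x a b assume "(x, a) \<in> \<Union>CC" "(x, b) \<in> \<Union>CC"
    then obtain X where "X \<in> CC" "(x, a) \<in> X" "(x, b) \<in> X"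
      using common by blast
    then show "a = b"
      using CC linear_graphD(3) unfolding dominated_linear_graphs_def by blast
  qed
  with assms(1) CC show ?thesis
    unfolding dominated_linear_graphs_def by blast
qed

theorem hahn_banach_graph:
  assumes p: "sublinear p" and G0: "G0 \<in> dominated_linear_graphs p G0" "G0 \<noteq> {}"
  shows "\<exists>g. linear g \<and> (\<forall>x. g x \<le> p x) \<and> (\<forall>x a. (x, a) \<in> G0 \<longrightarrow> g x = a)"
proof -
  have "\<exists>M\<in>dominated_linear_graphs p G0. \<forall>X\<in>dominated_linear_graphs p G0. M \<subseteq> X \<longrightarrow> X = M"
    by (rule subset_Zorn_nonempty) (use G0(1) Union_chain_dominated_linear_graphs in blast)+
  then obtain M where M: "M \<in> dominated_linear_graphs p G0"
    and maximal: "\<And>X. X \<in> dominated_linear_graphs p G0 \<Longrightarrow> M \<subseteq> X \<Longrightarrow> X = M"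
    by blast
  have lin: "linear_graph M" and dom: "\<forall>x a. (x, a) \<in> M \<longrightarrow> a \<le> p x" and "G0 \<subseteq> M"
    using M unfolding dominated_linear_graphs_def by blast+
  have "(0, 0) \<in> M"
    using G0(2) \<open>G0 \<subseteq> M\<close> linear_graphD(2)[OF lin, of _ _ 0] by fastforce
  have total: "\<exists>a. (x, a) \<in> M" for x
    using dominated_linear_graph_extend[OF p M \<open>(0, 0) \<in> M\<close>, of x] maximal by blast
  define g where "g x = (THE a. (x, a) \<in> M)" for x
  have g_graph: "(x, a) \<in> M \<longleftrightarrow> g x = a" for x a
    using total[of x] linear_graphD(3)[OF lin] unfolding g_def by (metis theI)
  have "linear g"
  proof (rule linearI)
    show "g (x + y) = g x + g y" for x y
      using linear_graphD(1)[OF lin, of x "g x" y "g y"] g_graph by blast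
    show "g (c *\<^sub>R x) = c *\<^sub>R g x" for c x
      using linear_graphD(2)[OF lin, of x "g x" c] g_graph by simp
  qed
  then show ?thesis
    using dom \<open>G0 \<subseteq> M\<close> g_graph by blast
qed

corollary hahn_banach_ray:
  assumes p: "sublinear p" and nonneg: "\<forall>x. 0 \<le> p x" and "1 \<le> p e"
  shows "\<exists>g. linear g \<and> g e = 1 \<and> (\<forall>x. g x \<le> p x)"
proof -
  define G0 where "G0 = {(t *\<^sub>R e, t) | t. True}"
  have "e \<noteq> 0"
    using \<open>1 \<le> p e\<close> sublinearD(2)[OF p, of 2 0] by auto
  then have "linear_graph G0"
    unfolding linear_graph_def G0_def by (auto simp: scaleR_add_left)
  moreover have "t \<le> p (t *\<^sub>R e)" for t
  proof (cases "t > 0")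
    case True
    then show ?thesis
      using sublinearD(2)[OF p True] \<open>1 \<le> p e\<close> mult_left_mono[of 1 "p e" t] by simp
  qed (use nonneg in \<open>simp add: not_less order_trans\<close>)
  ultimately have "G0 \<in> dominated_linear_graphs p G0"
    unfolding dominated_linear_graphs_def G0_def by blast
  moreover have "(e, 1) \<in> G0"
    using G0_def by force
  ultimately show ?thesis
    using hahn_banach_graph[OF p] by blast
qed

section \<open>Separation in locally convex spaces\<close>

lemma tvs_open_sums:
  assumes tvs: "topological_vector_space TYPE('a::{real_vector,topological_space})"
    and "open (V::'a set)"
  shows "open (\<Union>v\<in>V. \<Union>s\<in>S. {v + s})"
proof -
  have sums_eq: "(\<Union>v\<in>V. \<Union>s\<in>S. {v + s}) = (\<Union>s\<in>S. {w. w + - s \<in> V})"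
  proof (intro set_eqI iffI)
    fix w assume "w \<in> (\<Union>v\<in>V. \<Union>s\<in>S. {v + s})"
    then obtain v s where "v \<in> V" "s \<in> S" "w = v + s"
      by blast
    then show "w \<in> (\<Union>s\<in>S. {w. w + - s \<in> V})"
      by (intro UN_I[of s]) auto
  next
    fix w assume "w \<in> (\<Union>s\<in>S. {w. w + - s \<in> V})"
    then obtain s where "s \<in> S" "w + - s \<in> V"
      by blast
    then show "w \<in> (\<Union>v\<in>V. \<Union>s\<in>S. {v + s})"
      by (intro UN_I[of "w + - s"] UN_I[of s]) auto
  qed
  show ?thesis
    unfolding sums_eq by (intro open_UN ballI tvs_open_translation_preimage[OF tvs \<open>open V\<close>])
qed

lemma tvs_separate_point_open_convex:
  assumes tvs: "topological_vector_space TYPE('a::{real_vector,topological_space})"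
    and U: "open (U::'a set)" "convex U" "0 \<in> U" and "e \<notin> U"
  shows "\<exists>g\<in>topological_dual. g e = 1 \<and> (\<forall>u\<in>U. g u < 1)"
proof -
  let ?p = "minkowski_functional U"
  have "1 \<le> ?p e"
    using minkowski_functional_less_one_iff[OF tvs U, of e] \<open>e \<notin> U\<close> by linarith
  then obtain g where g: "linear g" "g e = 1" "\<forall>x. g x \<le> ?p x"
    using hahn_banach_ray[OF sublinear_minkowski_functional[OF tvs U]]
      minkowski_functional_nonneg[OF tvs U] by blast
  have g_U: "\<forall>u\<in>U. g u < 1"
    using g(3) minkowski_functional_less_one_iff[OF tvs U] by (meson le_less_trans)
  have "continuous_on UNIV g"
    using tvs_linear_continuous_if_bounded_above[OF tvs g(1) U(1,3) g_U] .
  with g(1,2) g_U show ?thesis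
    by (auto simp: topological_dual_def)
qed

theorem locally_convex_separate_point:
  assumes lcs: "locally_convex_space TYPE('a::{real_vector,topological_space})"
    and K: "closed (K::'a set)" "convex K" "K \<noteq> {}" and z0: "z0 \<notin> K"
  shows "\<exists>g\<in>topological_dual. \<exists>d>0. \<forall>k\<in>K. g k + d \<le> g z0"
proof -
  have tvs: "topological_vector_space TYPE('a)"
    using lcs unfolding locally_convex_space_def by blast
  obtain k0 where "k0 \<in> K"
    using K(3) by blast
  have "open {v. (-1) *\<^sub>R (v + - z0) \<in> - K}"
    using tvs_open_affine_preimage[OF tvs open_Compl[OF K(1)]] .
  moreover have "{v. (-1) *\<^sub>R (v + - z0) \<in> - K} = {v. z0 - v \<notin> K}"
    by (simp add: algebra_simps)
  ultimately have "open {v. z0 - v \<notin> K}"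
    by simp
  with lcs z0 have "\<exists>V. open V \<and> convex V \<and> 0 \<in> V \<and> V \<subseteq> {v. z0 - v \<notin> K}"
    unfolding locally_convex_space_def by simp
  then obtain V where V: "open V" "convex V" "0 \<in> V" and V_avoids: "\<And>v. v \<in> V \<Longrightarrow> z0 - v \<notin> K"
    by blast
  define U where "U = (\<Union>v\<in>V. \<Union>k'\<in>(\<lambda>k. k - k0) ` K. {v + k'})"
  have "open U"
    unfolding U_def by (rule tvs_open_sums[OF tvs V(1)])
  moreover have "convex U"
    unfolding U_def by (intro convex_sums convex_translation_subtract V(2) K(2))
  moreover have "0 \<in> U"
    using V(3) \<open>k0 \<in> K\<close> unfolding U_def by force
  moreover have "z0 - k0 \<notin> U"
  proof
    assume "z0 - k0 \<in> U"
    then obtain v k where "v \<in> V" "k \<in> K" "z0 - k0 = v + (k - k0)"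
      unfolding U_def by blast
    then show False
      using V_avoids[of v] by (simp add: algebra_simps)
  qed
  ultimately obtain g where g: "g \<in> topological_dual" "g (z0 - k0) = 1" and g_U: "\<forall>u\<in>U. g u < 1"
    using tvs_separate_point_open_convex[OF tvs] by blast
  have "linear g"
    using g(1) by (simp add: topological_dual_def)
  obtain s where "0 < s" "s *\<^sub>R (z0 - k0) \<in> V"
  proof -
    obtain r where "r > 0" "\<forall>t. \<bar>t - 0\<bar> < r \<longrightarrow> t *\<^sub>R (z0 - k0) \<in> V"
      using tvs_open_ray[OF tvs V(1), of 0 "z0 - k0"] V(3) by auto
    then show thesis
      using that[of "r/2"] by simp
  qed
  have "g k + s \<le> g z0" if "k \<in> K" for k
  proof -
    have "s *\<^sub>R (z0 - k0) + (k - k0) \<in> U"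
      using \<open>s *\<^sub>R (z0 - k0) \<in> V\<close> that unfolding U_def by blast
    then have "g (s *\<^sub>R (z0 - k0) + (k - k0)) < 1"
      using g_U by blast
    moreover have "g z0 - g k0 = 1"
      using \<open>linear g\<close> g(2) by (simp add: linear_diff)
    moreover have "g (s *\<^sub>R (z0 - k0) + (k - k0)) = s * (g z0 - g k0) + g k - g k0"
      using \<open>linear g\<close> by (simp add: linear_add linear_diff linear_scale)
    ultimately show ?thesis
      by simp
  qed
  with g(1) \<open>0 < s\<close> show ?thesis
    by blast
qed

section \<open>Scalarization and lower lattice-semicontinuity\<close>

lemma upper_closed_setsD:
  assumes "A \<in> upper_closed_sets C"
  shows "closed A" and "a \<in> A \<Longrightarrow> c \<in> C \<Longrightarrow> a + c \<in> A"
proof -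
  have A: "A = closure {a + c | a c. a \<in> A \<and> c \<in> C}"
    using assms unfolding upper_closed_sets_def by blast
  show "closed A"
    by (subst A) (rule closed_closure)
  show "a + c \<in> A" if "a \<in> A" "c \<in> C"
  proof -
    have "a + c \<in> {a + c | a c. a \<in> A \<and> c \<in> C}"
      using that by blast
    then show ?thesis
      by (subst A) (rule closure_subset[THEN subsetD])
  qed
qed

lemma neg_dual_cone_separates_upper_closed_set:
  assumes lcs: "locally_convex_space TYPE('z::{real_vector,topological_space})"
    and C: "cone (C::'z set)" "neg_dual_cone C \<noteq> {(\<lambda>_. 0)}"
    and K: "K \<in> upper_closed_sets C" "convex K" and z0: "z0 \<notin> K"
  shows "\<exists>g\<in>neg_dual_cone C - {(\<lambda>_. 0)}. \<exists>d>0. \<forall>k\<in>K. g k + d \<le> g z0"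
proof (cases "K = {}")
  case True
  have "(\<lambda>_. 0) \<in> neg_dual_cone C"
    by (simp add: neg_dual_cone_def topological_dual_def linear_zero)
  with C(2) obtain g where "g \<in> neg_dual_cone C - {(\<lambda>_. 0)}"
    by blast
  with True show ?thesis
    by (intro bexI[of _ g] exI[of _ "1::real"]) auto
next
  case False
  then obtain k0 where "k0 \<in> K"
    by blast
  obtain g d where g: "g \<in> topological_dual" and "d > 0" and sep: "\<forall>k\<in>K. g k + d \<le> g z0"
    using locally_convex_separate_point[OF lcs upper_closed_setsD(1)[OF K(1)] K(2) False z0] by blast
  have "linear g"
    using g by (simp add: topological_dual_def)
  have "g c \<le> 0" if "c \<in> C" for c
  proof (rule ccontr)
    assume "\<not> g c \<le> 0"
    \<comment> \<open>moving from \<open>k0\<close> along the recession direction \<open>c\<close> would reach the level \<open>g z0\<close>\<close>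
    define t where "t = (g z0 - g k0) / g c"
    have "g k0 + d \<le> g z0"
      using sep \<open>k0 \<in> K\<close> by blast
    then have "0 \<le> t"
      using \<open>\<not> g c \<le> 0\<close> \<open>d > 0\<close> by (simp add: t_def)
    then have "k0 + t *\<^sub>R c \<in> K"
      using upper_closed_setsD(2)[OF K(1) \<open>k0 \<in> K\<close>] C(1) \<open>c \<in> C\<close> unfolding cone_def by blast
    moreover have "g (k0 + t *\<^sub>R c) = g z0"
      using \<open>linear g\<close> \<open>\<not> g c \<le> 0\<close> by (simp add: t_def linear_add linear_scale)
    ultimately have "g z0 + d \<le> g z0"
      using sep by metis
    with \<open>d > 0\<close> show False
      by simp
  qed
  then have "g \<in> neg_dual_cone C"
    using g by (simp add: neg_dual_cone_def)
  moreover have "g \<noteq> (\<lambda>_. 0)"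
  proof
    assume "g = (\<lambda>_. 0)"
    with sep \<open>k0 \<in> K\<close> \<open>d > 0\<close> show False
      by auto
  qed
  ultimately show ?thesis
    using \<open>d > 0\<close> sep by blast
qed

lemma lsc_scalarization_avoids_point:
  assumes g: "continuous_on UNIV g" and lsc: "lsc_at_point (scalarization f g) x0"
    and "d > 0" and sep: "\<forall>k\<in>f x0. g k + d \<le> g z0"
  shows "\<exists>U\<in>neighbourhoods x0. z0 \<notin> closure (\<Union>x\<in>U. f x)"
proof -
  have "ereal (- g z0 + d/2) < ereal (- g z0 + d)"
    using \<open>d > 0\<close> by simp
  also have "\<dots> \<le> scalarization f g x0"
    unfolding scalarization_def by (rule INF_greatest) (use sep in auto)
  finally have "ereal (- g z0 + d/2) < scalarization f g x0" .
  then obtain W where W: "open W" "x0 \<in> W" and W_bound: "\<forall>x\<in>W. ereal (- g z0 + d/2) < scalarization f g x"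
    using lsc unfolding lsc_at_point_def eventually_nhds by blast
  \<comment> \<open>the open half-space \<open>{g > g z0 - d/2}\<close> contains \<open>z0\<close> but no point of \<open>f x\<close>, \<open>x \<in> W\<close>\<close>
  define H where "H = g -` {g z0 - d/2 <..}"
  have "open H"
    unfolding H_def using open_vimage[OF _ g] by simp
  moreover have "z0 \<in> H"
    using \<open>d > 0\<close> by (simp add: H_def)
  moreover have "H \<inter> (\<Union>x\<in>W. f x) = {}"
  proof -
    have "\<not> g z0 - d/2 < g z" if "x \<in> W" "z \<in> f x" for x z
    proof -
      have "scalarization f g x \<le> ereal (- g z)"
        unfolding scalarization_def using that(2) by (rule INF_lower)
      then have "ereal (- g z0 + d/2) < ereal (- g z)"
        using W_bound that(1) by (blast intro: less_le_trans)
      then show ?thesis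
        by simp
    qed
    then show ?thesis
      by (auto simp: H_def)
  qed
  ultimately have "z0 \<notin> closure (\<Union>x\<in>W. f x)"
    using open_Int_closure_eq_empty by blast
  moreover have "W \<in> neighbourhoods x0"
    unfolding neighbourhoods_def using W by blast
  ultimately show ?thesis
    by blast
qed

theorem mainTheorem15:
  fixes f :: "'x::{real_vector,topological_space} \<Rightarrow> 'z::{real_vector,topological_space} set"
    and C :: "'z set" and x0 :: 'x
  assumes "topological_vector_space TYPE('x)"
    and "locally_convex_space TYPE('z)"
    and "C \<noteq> {}" and "closed C" and "convex C" and "cone C"
    and "neg_dual_cone C \<noteq> {(\<lambda>_. 0)}"
    and "\<forall>x. f x \<in> upper_closed_sets C"
    and "convex (f x0)"
    and "\<forall>g\<in>neg_dual_cone C - {(\<lambda>_. 0)}. lsc_at_point (scalarization f g) x0"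
  shows "lower_lattice_semicontinuous_at f x0"
  unfolding lower_lattice_semicontinuous_at_def
proof
  fix z0 assume z0: "z0 \<in> (\<Inter>U\<in>neighbourhoods x0. closure (\<Union>x\<in>U. f x))"
  show "z0 \<in> f x0"
  proof (rule ccontr)
    assume "z0 \<notin> f x0"
    then obtain g d where g: "g \<in> neg_dual_cone C - {(\<lambda>_. 0)}" and "d > 0"
      and sep: "\<forall>k\<in>f x0. g k + d \<le> g z0"
      using neg_dual_cone_separates_upper_closed_set[OF assms(2,6,7) _ assms(9)] assms(8) by blast
    have "continuous_on UNIV g"
      using g by (simp add: neg_dual_cone_def topological_dual_def)
    then obtain U where "U \<in> neighbourhoods x0" "z0 \<notin> closure (\<Union>x\<in>U. f x)"
      using lsc_scalarization_avoids_point[of g f x0 d z0] \<open>d > 0\<close> sep assms(10) g by blast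
    with z0 show False
      by blast
  qed
qed

end
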